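(* Let $\kappa$ be an uncountable regular cardinal, let $\mathcal{I}$ be a $\kappa$-complete proper ideal on $\kappa$ containing every bounded subset of $\kappa$, and let $\nu\in\{2,\kappa\}$. For every function $\Phi\colon{}^{\kappa}\nu\to{}^{\kappa}\nu$ that is continuous with respect to $\tau_{\mathcal{I}}$ on both sides, there is a continuous $\varphi\colon\mathrm{Fn}_{\mathcal{I}}({}^{\kappa}\nu)\to\mathrm{Fn}_{\mathcal{I}}({}^{\kappa}\nu)$ with $\varphi^*=\Phi$.
   Context: ${}^{\kappa}\nu$ is the set of functions $\kappa\to\nu$, $\mathrm{Fn}_{\mathcal{I}}({}^{\kappa}\nu)$ the set of functions $f\colon D\to\nu$ with $D\in\mathcal{I}$, $\mathbf{N}_f=\{x:f\subseteq x\}$, and $\tau_{\mathcal{I}}$ the topology on ${}^{\kappa}\nu$ generated by the sets $\mathbf{N}_f$. A map $\varphi\colon\mathrm{Fn}_{\mathcal{I}}\to\mathrm{Fn}_{\mathcal{I}}$ is monotone if $f\subseteq g$ implies $\varphi(f)\subseteq\varphi(g)$; it is continuous if it is monotone and for all $x\in{}^{\kappa}\nu$ and $D\in\mathcal{I}$ there is $E\in\mathcal{I}$ with $D\subseteq\mathrm{dom}(\varphi(x\restriction E))$. For continuous $\varphi$, $\varphi^*(x)$ is the limit $\lim_{D\in\mathcal{I}}\varphi(x\restriction D)$ over the directed set $(\mathcal{I},\subseteq)$, i.e. the unique $z\in{}^{\kappa}\nu$ such that for every $D\in\mathcal{I}$ there is $E\in\mathcal{I}$ with $z\restriction D=\varphi(x\restriction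 E')\restriction D$ for all $E'\in\mathcal{I}$ with $E\subseteq E'$. *)

theory Defs
  imports "HOL-Analysis.Analysis"
begin

unbundle cardinal_syntax

text \<open>kappa is represented by a type 'k carrying a cardinal well-order r on UNIV.
  Total functions kappa -> nu are functions 'k \<Rightarrow> 'v; partial functions are maps 'k \<rightharpoonup> 'v.\<close>

definition kappa_complete_ideal :: "('k \<times> 'k) set \<Rightarrow> 'k set set \<Rightarrow> bool" where
  "kappa_complete_ideal r I \<longleftrightarrow>
     {} \<in> I \<and>
     (\<forall>A B. A \<in> I \<and> B \<subseteq> A \<longrightarrow> B \<in> I) \<and>
     (\<forall>\<A>. \<A> \<subseteq> I \<and> |\<A>| <o r \<longrightarrow> \<Union>\<A> \<in> I)"

definition proper_ideal :: "'k set set \<Rightarrow> bool" where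
  "proper_ideal I \<longleftrightarrow> UNIV \<notin> I"

definition bounded_in :: "('k \<times> 'k) set \<Rightarrow> 'k set \<Rightarrow> bool" where
  "bounded_in r A \<longleftrightarrow> (\<exists>b. \<forall>a\<in>A. (a, b) \<in> r)"

definition Fn :: "'k set set \<Rightarrow> ('k \<rightharpoonup> 'v) set" where
  "Fn I = {f. dom f \<in> I}"

definition Nbhd :: "('k \<rightharpoonup> 'v) \<Rightarrow> ('k \<Rightarrow> 'v) set" where
  "Nbhd f = {x. \<forall>d\<in>dom f. f d = Some (x d)}"

definition tau :: "'k set set \<Rightarrow> ('k \<Rightarrow> 'v) topology" where
  "tau I = topology_generated_by (Nbhd ` Fn I)"

definition restr :: "('k \<Rightarrow> 'v) \<Rightarrow> 'k set \<Rightarrow> ('k \<rightharpoonup> 'v)" where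
  "restr x E = (Some \<circ> x) |` E"

definition monotone_Fn :: "'k set set \<Rightarrow> (('k \<rightharpoonup> 'v) \<Rightarrow> ('k \<rightharpoonup> 'v)) \<Rightarrow> bool" where
  "monotone_Fn I \<phi> \<longleftrightarrow> (\<forall>f\<in>Fn I. \<forall>g\<in>Fn I. f \<subseteq>\<^sub>m g \<longrightarrow> \<phi> f \<subseteq>\<^sub>m \<phi> g)"

definition continuous_Fn :: "'k set set \<Rightarrow> (('k \<rightharpoonup> 'v) \<Rightarrow> ('k \<rightharpoonup> 'v)) \<Rightarrow> bool" where
  "continuous_Fn I \<phi> \<longleftrightarrow>
     (\<forall>f\<in>Fn I. \<phi> f \<in> Fn I) \<and> monotone_Fn I \<phi> \<and>
     (\<forall>x. \<forall>D\<in>I. \<exists>E\<in>I. D \<subseteq> dom (\<phi> (restr x E)))"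

text \<open>z is the limit of phi(x|D) over the directed set (I, subseteq).\<close>
definition is_lim :: "'k set set \<Rightarrow> (('k \<rightharpoonup> 'v) \<Rightarrow> ('k \<rightharpoonup> 'v)) \<Rightarrow> ('k \<Rightarrow> 'v) \<Rightarrow> ('k \<Rightarrow> 'v) \<Rightarrow> bool" where
  "is_lim I \<phi> x z \<longleftrightarrow>
     (\<forall>D\<in>I. \<exists>E\<in>I. \<forall>E'\<in>I. E \<subseteq> E' \<longrightarrow> restr z D = \<phi> (restr x E') |` D)"

definition star :: "'k set set \<Rightarrow> (('k \<rightharpoonup> 'v) \<Rightarrow> ('k \<rightharpoonup> 'v)) \<Rightarrow> ('k \<Rightarrow> 'v) \<Rightarrow> ('k \<Rightarrow> 'v)" where
  "star I \<phi> x = (THE z. is_lim I \<phi> x z)"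

end

theory Submission
  imports Defs
begin

unbundle cardinal_syntax

text \<open>Let \<open>\<phi>(f)\<close> keep exactly those values \<open>\<Phi>(y)(d)\<close>, \<open>d \<in> dom f\<close>, that are the same for
  all \<open>y \<supseteq> f\<close>. This is monotone, and continuity of \<open>\<Phi>\<close> at \<open>x\<close> says that for every \<open>D \<in> \<I>\<close>
  some \<open>E \<in> \<I>\<close> already determines \<open>\<Phi>(x)\<restriction>D\<close>, i.e. \<open>\<Phi>(x)\<restriction>D \<subseteq> \<phi>(x\<restriction>E')\<close> for all
  \<open>E' \<supseteq> E\<close>. So \<open>\<Phi>(x)\<close> is a limit of \<open>\<phi>(x\<restriction>E)\<close>, and it is the only one because \<open>\<I>\<close> is
  directed and contains all singletons.\<close>

lemma kappa_complete_idealD_empty: "kappa_complete_ideal r I \<Longrightarrow> {} \<in> I"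
  unfolding kappa_complete_ideal_def by blast

lemma kappa_complete_idealD_subset:
  "kappa_complete_ideal r I \<Longrightarrow> A \<in> I \<Longrightarrow> B \<subseteq> A \<Longrightarrow> B \<in> I"
  unfolding kappa_complete_ideal_def by blast

lemma kappa_complete_idealD_Union:
  "kappa_complete_ideal r I \<Longrightarrow> \<A> \<subseteq> I \<Longrightarrow> |\<A>| <o r \<Longrightarrow> \<Union>\<A> \<in> I"
  unfolding kappa_complete_ideal_def by blast

lemma kappa_complete_ideal_Un:
  assumes "card_order r" and "\<not> finite (UNIV :: 'k set)"
    and "kappa_complete_ideal r (I :: 'k set set)" and "A \<in> I" and "B \<in> I"
  shows "A \<union> B \<in> I"
proof -
  have "Field r = UNIV"
    using card_order_on_Card_order[OF \<open>card_order r\<close>] by simp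
  moreover have "Well_order r"
    using card_order_on_well_order_on[OF \<open>card_order r\<close>] \<open>Field r = UNIV\<close> by simp
  ultimately have "|{A, B}| <o r"
    using finite_ordLess_infinite[OF card_of_Well_order, of r "{A, B}"] \<open>\<not> finite (UNIV :: 'k set)\<close>
    by (simp add: Field_card_of)
  moreover have "{A, B} \<subseteq> I"
    using assms(4,5) by simp
  ultimately show ?thesis
    using kappa_complete_idealD_Union[OF assms(3), of "{A, B}"] by simp
qed

lemma singleton_in_ideal:
  assumes "card_order r" and "\<forall>A. bounded_in r A \<longrightarrow> A \<in> I"
  shows "{d} \<in> I"
proof -
  have "refl_on UNIV r"
    using card_order_on_well_order_on[OF \<open>card_order r\<close>]
    unfolding well_order_on_def linear_order_on_def partial_order_on_def preorder_on_def
    by (elim conjE)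
  then have "(d, d) \<in> r"
    by (rule refl_onD) simp
  then have "bounded_in r {d}"
    unfolding bounded_in_def by blast
  with assms(2) show ?thesis by blast
qed

lemma dom_restr [simp]: "dom (restr x E) = E"
  unfolding restr_def by auto

lemma Nbhd_restr: "y \<in> Nbhd (restr x E) \<longleftrightarrow> (\<forall>d\<in>E. y d = x d)"
  unfolding Nbhd_def restr_def by (auto simp: eq_commute)

lemma Nbhd_restr_antimono: "E \<subseteq> E' \<Longrightarrow> Nbhd (restr x E') \<subseteq> Nbhd (restr x E)"
  unfolding subset_iff Nbhd_restr by blast

lemma the_in_Nbhd: "the \<circ> f \<in> Nbhd f"
  unfolding Nbhd_def by auto

lemma Nbhd_antimono:
  assumes "f \<subseteq>\<^sub>m g"
  shows "Nbhd g \<subseteq> Nbhd f"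
proof
  fix x assume "x \<in> Nbhd g"
  have "f d = Some (x d)" if "d \<in> dom f" for d
  proof -
    have "f d = g d"
      using \<open>f \<subseteq>\<^sub>m g\<close> that unfolding map_le_def by blast
    with that have "d \<in> dom g"
      by (simp add: domIff)
    with \<open>f d = g d\<close> \<open>x \<in> Nbhd g\<close> show ?thesis
      unfolding Nbhd_def by simp
  qed
  then show "x \<in> Nbhd f"
    unfolding Nbhd_def by blast
qed

lemma topspace_tau:
  assumes "{} \<in> I"
  shows "topspace (tau I) = UNIV"
proof -
  have "Nbhd Map.empty \<in> Nbhd ` Fn I"
    using assms by (simp add: Fn_def)
  moreover have "Nbhd Map.empty = UNIV"
    by (simp add: Nbhd_def)
  ultimately show ?thesis
    unfolding tau_def topology_generated_by_topspace by (metis Sup_upper top.extremum_uniqueI)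
qed

lemma openin_tau_Nbhd: "f \<in> Fn I \<Longrightarrow> openin (tau I) (Nbhd f)"
  unfolding tau_def openin_topology_generated_by_iff
  by (rule generate_topology_on.Basis) (rule imageI)

lemma openin_tau_imp_Nbhd_restr_subset:
  assumes Un: "\<And>A B. A \<in> I \<Longrightarrow> B \<in> I \<Longrightarrow> A \<union> B \<in> I"
    and "openin (tau I) U" and "x \<in> U"
  shows "\<exists>E\<in>I. Nbhd (restr x E) \<subseteq> U"
proof -
  have "generate_topology_on (Nbhd ` Fn I) U"
    using \<open>openin (tau I) U\<close> unfolding tau_def openin_topology_generated_by_iff .
  then show ?thesis
    using \<open>x \<in> U\<close>
  proof (induction arbitrary: x)
    case Empty
    then show ?case by simp
  next
    case (Int U V)
    then obtain E1 E2 where "E1 \<in> I" "Nbhd (restr x E1) \<subseteq> U" "E2 \<in> I" "Nbhd (restr x E2) \<subseteq> V"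
      by blast
    moreover have "Nbhd (restr x (E1 \<union> E2)) \<subseteq> Nbhd (restr x E1) \<inter> Nbhd (restr x E2)"
      by (auto simp: Nbhd_restr)
    ultimately show ?case
      using Un[of E1 E2] by blast
  next
    case (UN K)
    then show ?case by blast
  next
    case (Basis U)
    then obtain f where "dom f \<in> I" "U = Nbhd f"
      unfolding Fn_def by blast
    moreover have "Nbhd (restr x (dom f)) \<subseteq> Nbhd f"
      using Basis.prems \<open>U = Nbhd f\<close> unfolding Nbhd_def restr_def by auto
    ultimately show ?case by blast
  qed
qed

lemma continuous_map_tau_local:
  assumes Un: "\<And>A B. A \<in> I \<Longrightarrow> B \<in> I \<Longrightarrow> A \<union> B \<in> I" and "{} \<in> I"
    and "continuous_map (tau I) (tau I) \<Phi>" and "D \<in> I"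
  shows "\<exists>E\<in>I. D \<subseteq> E \<and> \<Phi> ` Nbhd (restr x E) \<subseteq> Nbhd (restr (\<Phi> x) D)"
proof -
  let ?U = "{y. \<Phi> y \<in> Nbhd (restr (\<Phi> x) D)}"
  have "openin (tau I) ?U"
    using openin_continuous_map_preimage[OF \<open>continuous_map (tau I) (tau I) \<Phi>\<close>
        openin_tau_Nbhd[of "restr (\<Phi> x) D"]] \<open>D \<in> I\<close>
    by (simp add: Fn_def topspace_tau[OF \<open>{} \<in> I\<close>])
  moreover have "x \<in> ?U"
    by (simp add: Nbhd_restr)
  ultimately obtain E where "E \<in> I" and "Nbhd (restr x E) \<subseteq> ?U"
    using openin_tau_imp_Nbhd_restr_subset[OF Un] by metis
  moreover have "Nbhd (restr x (D \<union> E)) \<subseteq> Nbhd (restr x E)"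
    by (rule Nbhd_restr_antimono) simp
  ultimately show ?thesis
    using Un[OF \<open>D \<in> I\<close> \<open>E \<in> I\<close>] by blast
qed

definition determined_part :: "(('k \<Rightarrow> 'v) \<Rightarrow> ('k \<Rightarrow> 'v)) \<Rightarrow> ('k \<rightharpoonup> 'v) \<Rightarrow> ('k \<rightharpoonup> 'v)" where
  "determined_part \<Phi> f d =
     (if d \<in> dom f \<and> (\<forall>y\<in>Nbhd f. \<Phi> y d = \<Phi> (the \<circ> f) d) then Some (\<Phi> (the \<circ> f) d) else None)"

lemma dom_determined_part_subset: "dom (determined_part \<Phi> f) \<subseteq> dom f"
  unfolding determined_part_def by (auto split: if_splits)

lemma determined_part_eqI:
  assumes "d \<in> dom f" and "\<forall>y\<in>Nbhd f. \<Phi> y d = v"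
  shows "determined_part \<Phi> f d = Some v"
  using assms the_in_Nbhd[of f] unfolding determined_part_def by simp

lemma determined_part_mono:
  assumes "f \<subseteq>\<^sub>m g"
  shows "determined_part \<Phi> f \<subseteq>\<^sub>m determined_part \<Phi> g"
  unfolding map_le_def
proof
  fix d assume "d \<in> dom (determined_part \<Phi> f)"
  then have "d \<in> dom f" and const: "\<forall>y\<in>Nbhd f. \<Phi> y d = \<Phi> (the \<circ> f) d"
    unfolding determined_part_def by (auto split: if_splits)
  moreover have "d \<in> dom g"
    using \<open>f \<subseteq>\<^sub>m g\<close> \<open>d \<in> dom f\<close> unfolding map_le_def by (metis domIff)
  moreover have "\<forall>y\<in>Nbhd g. \<Phi> y d = \<Phi> (the \<circ> f) d"
    using const Nbhd_antimono[OF \<open>f \<subseteq>\<^sub>m g\<close>] by blast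
  ultimately have "determined_part \<Phi> f d = Some (\<Phi> (the \<circ> f) d)"
    and "determined_part \<Phi> g d = Some (\<Phi> (the \<circ> f) d)"
    by (simp_all only: determined_part_eqI)
  then show "determined_part \<Phi> f d = determined_part \<Phi> g d"
    by simp
qed

lemma determined_part_restr:
  assumes "D \<subseteq> E" and "\<Phi> ` Nbhd (restr x E) \<subseteq> Nbhd (restr (\<Phi> x) D)"
  shows "determined_part \<Phi> (restr x E) |` D = restr (\<Phi> x) D"
proof
  fix d
  show "(determined_part \<Phi> (restr x E) |` D) d = restr (\<Phi> x) D d"
  proof (cases "d \<in> D")
    case True
    then have "\<forall>y\<in>Nbhd (restr x E). \<Phi> y d = \<Phi> x d"
      using assms(2) by (auto simp: Nbhd_restr)
    then have "determined_part \<Phi> (restr x E) d = Some (\<Phi> x d)"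
      using True \<open>D \<subseteq> E\<close> by (intro determined_part_eqI) auto
    with True show ?thesis
      by (simp add: restr_def)
  qed (simp add: restr_def)
qed

context
  fixes r :: "('k \<times> 'k) set" and I :: "'k set set"
  assumes card_order: "card_order r" and infinite: "\<not> finite (UNIV :: 'k set)"
    and ideal: "kappa_complete_ideal r I"
begin

private lemma Un_in_ideal: "A \<in> I \<Longrightarrow> B \<in> I \<Longrightarrow> A \<union> B \<in> I"
  using kappa_complete_ideal_Un[OF card_order infinite ideal] .

lemma continuous_Fn_determined_part:
  fixes \<Phi> :: "('k \<Rightarrow> 'v) \<Rightarrow> ('k \<Rightarrow> 'v)"
  assumes "continuous_map (tau I) (tau I) \<Phi>"
  shows "continuous_Fn I (determined_part \<Phi>)"
  unfolding continuous_Fn_def monotone_Fn_def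
proof (intro conjI ballI allI impI)
  fix f :: "'k \<rightharpoonup> 'v" assume "f \<in> Fn I"
  then have "dom f \<in> I"
    by (simp add: Fn_def)
  then show "determined_part \<Phi> f \<in> Fn I"
    unfolding Fn_def mem_Collect_eq
    by (rule kappa_complete_idealD_subset[OF ideal _ dom_determined_part_subset])
next
  fix f g :: "'k \<rightharpoonup> 'v" assume "f \<subseteq>\<^sub>m g"
  then show "determined_part \<Phi> f \<subseteq>\<^sub>m determined_part \<Phi> g"
    by (rule determined_part_mono)
next
  fix x :: "'k \<Rightarrow> 'v" and D assume "D \<in> I"
  then obtain E where "E \<in> I" "D \<subseteq> E" "\<Phi> ` Nbhd (restr x E) \<subseteq> Nbhd (restr (\<Phi> x) D)"
    using continuous_map_tau_local[OF Un_in_ideal kappa_complete_idealD_empty[OF ideal] assms]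
    by blast
  then have "dom (determined_part \<Phi> (restr x E) |` D) = D"
    by (simp add: determined_part_restr)
  then show "\<exists>E\<in>I. D \<subseteq> dom (determined_part \<Phi> (restr x E))"
    using \<open>E \<in> I\<close> by auto
qed

lemma is_lim_determined_part:
  assumes "continuous_map (tau I) (tau I) \<Phi>"
  shows "is_lim I (determined_part \<Phi>) x (\<Phi> x)"
  unfolding is_lim_def
proof
  fix D assume "D \<in> I"
  then obtain E where "E \<in> I" "D \<subseteq> E" "\<Phi> ` Nbhd (restr x E) \<subseteq> Nbhd (restr (\<Phi> x) D)"
    using continuous_map_tau_local[OF Un_in_ideal kappa_complete_idealD_empty[OF ideal] assms]
    by blast
  then have "restr (\<Phi> x) D = determined_part \<Phi> (restr x E') |` D" if "E \<subseteq> E'" for E'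
    using Nbhd_restr_antimono[OF that, of x] \<open>E \<subseteq> E'\<close>
    by (intro determined_part_restr[symmetric]) auto
  then show "\<exists>E\<in>I. \<forall>E'\<in>I. E \<subseteq> E' \<longrightarrow> restr (\<Phi> x) D = determined_part \<Phi> (restr x E') |` D"
    using \<open>E \<in> I\<close> by blast
qed

lemma is_lim_unique:
  assumes "\<And>d. {d} \<in> I" and "is_lim I \<phi> x z" and "is_lim I \<phi> x z'"
  shows "z = z'"
proof
  fix d
  obtain E where "E \<in> I" and E: "\<forall>F\<in>I. E \<subseteq> F \<longrightarrow> restr z {d} = \<phi> (restr x F) |` {d}"
    using assms(2) \<open>{d} \<in> I\<close> unfolding is_lim_def by blast
  obtain E' where "E' \<in> I" and E': "\<forall>F\<in>I. E' \<subseteq> F \<longrightarrow> restr z' {d} = \<phi> (restr x F) |` {d}"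
    using assms(3) \<open>{d} \<in> I\<close> unfolding is_lim_def by blast
  have "E \<union> E' \<in> I"
    using Un_in_ideal[OF \<open>E \<in> I\<close> \<open>E' \<in> I\<close>] .
  then have "restr z {d} = restr z' {d}"
    using E E' by simp
  then have "restr z {d} d = restr z' {d} d"
    by simp
  then show "z d = z' d"
    by (simp add: restr_def)
qed


lemma star_eqI:
  assumes "\<And>d. {d} \<in> I" and "is_lim I \<phi> x z"
  shows "star I \<phi> x = z"
  unfolding star_def
proof (rule the_equality)
  show "is_lim I \<phi> x z"
    by (fact assms(2))
  show "y = z" if "is_lim I \<phi> x y" for y
    using is_lim_unique[OF assms(1) that assms(2)] .
qed

end

theorem proposition3p3:
  fixes r :: "('k \<times> 'k) set" and I :: "'k set set"
    and \<Phi> :: "('k \<Rightarrow> 'v) \<Rightarrow> ('k \<Rightarrow> 'v)"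
  assumes "card_order r"
    and "regularCard r"
    and "\<not> countable (UNIV :: 'k set)"
    and "kappa_complete_ideal r I"
    and "proper_ideal I"
    and "\<forall>A. bounded_in r A \<longrightarrow> A \<in> I"
    and "card (UNIV :: 'v set) = 2 \<or> |UNIV :: 'v set| =o r"
    and "continuous_map (tau I) (tau I) \<Phi>"
  shows "\<exists>\<phi>. continuous_Fn I \<phi> \<and> star I \<phi> = \<Phi>"
proof -
  have infinite: "\<not> finite (UNIV :: 'k set)"
    using assms(3) countable_finite by blast
  have "star I (determined_part \<Phi>) x = \<Phi> x" for x
    using star_eqI[OF assms(1) infinite assms(4) singleton_in_ideal[OF assms(1,6)]]
      is_lim_determined_part[OF assms(1) infinite assms(4,8)] .
  then show ?thesis
    using continuous_Fn_determined_part[OF assms(1) infinite assms(4,8)] by blast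
qed

end
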